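(* Let $2\le r_1<r_2$ be integers and let $T=[h,q_1,q_2]\in\mathfrak{F}(n)$. For an integer $j\ge 3$, let $T_j$ be the starlike tree consisting of a central vertex to which $r_2$ pendant paths with $2$ edges each and one pendant path with $j$ edges are attached. Then $\rho(T)>\rho(T_j)$.
   Context: $\rho(G)$ denotes the spectral radius (largest eigenvalue of the adjacency matrix) of a graph $G$. For integers $h,q_1,q_2\ge 2$ and fixed integers $2\le r_1<r_2$, the tree $[h,q_1,q_2]$ is constructed as follows: take a vertex $u$; attach to $u$ a pendant path with $h$ edges; attach to $u$ a path with $q_1$ edges ending at a vertex $v_1$, and attach to $v_1$ exactly $r_1$ pendant paths with $2$ edges each; attach to $u$ a path with $q_2$ edges ending at a vertex $v_2$, and attach to $v_2$ exactly $r_2$ pendant paths with $2$ edges each. It has $n=1+h+q_1+q_2+2(r_1+r_2)$ vertices. $\mathfrak{F}(n)$ is the set of all such trees $[h,q_1,q_2]$ with $h,q_1,q_2\ge2$ and $h+q_1+q_2=n-1-2(r_1+r_2)$ (for the fixed $r_1,r_2$). *)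

theory Defs
  imports "Jordan_Normal_Form.Char_Poly"
begin

text \<open>A finite simple graph on vertex set {0..<N} is given by N and a set E of
  (unordered, stored as ordered pairs) edges.\<close>

definition adj_matrix :: "nat \<Rightarrow> (nat \<times> nat) set \<Rightarrow> real mat" where
  "adj_matrix N E = mat N N (\<lambda>(i, j). if i \<noteq> j \<and> ((i, j) \<in> E \<or> (j, i) \<in> E) then 1 else 0)"

text \<open>Spectral radius = largest eigenvalue of the (real symmetric) adjacency matrix.\<close>
definition rho :: "nat \<Rightarrow> (nat \<times> nat) set \<Rightarrow> real" where
  "rho N E = Max {k. eigenvalue (adj_matrix N E) k}"

definition pend :: "nat \<Rightarrow> nat \<Rightarrow> nat \<Rightarrow> (nat \<times> nat) set" where
  "pend a f len = (if len = 0 then {} else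
      insert (a, f) {(f + k, f + k + 1) | k. k + 1 < len})"

text \<open>The tree [h,q1,q2] (with parameters r1, r2): u = 0, pendant path 1..h,
  path to v1 = h+q1, r1 pendant 2-paths at v1, path to v2 = s+q2-1 where
  s = h+q1+1+2 r1, r2 pendant 2-paths at v2.\<close>
definition tree_F_verts :: "nat \<Rightarrow> nat \<Rightarrow> nat \<Rightarrow> nat \<Rightarrow> nat \<Rightarrow> nat" where
  "tree_F_verts r1 r2 h q1 q2 = 1 + h + q1 + q2 + 2 * (r1 + r2)"

definition tree_F_edges :: "nat \<Rightarrow> nat \<Rightarrow> nat \<Rightarrow> nat \<Rightarrow> nat \<Rightarrow> (nat \<times> nat) set" where
  "tree_F_edges r1 r2 h q1 q2 =
     (let v1 = h + q1; s = h + q1 + 1 + 2 * r1; v2 = s + q2 - 1 in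
      pend 0 1 h \<union> pend 0 (h + 1) q1
      \<union> (\<Union>i<r1. pend v1 (v1 + 1 + 2 * i) 2)
      \<union> pend 0 s q2
      \<union> (\<Union>i<r2. pend v2 (v2 + 1 + 2 * i) 2))"

definition star_T_verts :: "nat \<Rightarrow> nat \<Rightarrow> nat" where
  "star_T_verts r2 j = 1 + 2 * r2 + j"

definition star_T_edges :: "nat \<Rightarrow> nat \<Rightarrow> (nat \<times> nat) set" where
  "star_T_edges r2 j = (\<Union>i<r2. pend 0 (1 + 2 * i) 2) \<union> pend 0 (1 + 2 * r2) j"

end

(*
  Write \<mu> = s + 1/s with s > 1. On a path, vertex weights s^k - s^-k satisfy the eigenvalue
  equations for \<mu>. Choose t > 1 with r2 (t^2 - t^-2) = t (t^3 - t^-3), possible as r2 \<ge> 3.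
  Weighting the pendant paths of T_j this way and letting the weights decay like t^-k along
  the long path gives a positive vector y with A y \<le> (t + 1/t) y for the adjacency matrix A,
  so \<rho>(T_j) \<le> t + 1/t for every j. In [h,q1,q2], a nonnegative vector x built from the same
  weights on u, the path from u to v2 and the pendant paths at v2 satisfies A x \<ge> (s + 1/s) x
  as soon as an inequality \<phi>(s) \<ge> 0 holds at v2. The choice of t makes \<phi>(t) > 0, so by
  continuity some s > t works, and a Perron-type argument gives
  \<rho>([h,q1,q2]) \<ge> s + 1/s > t + 1/t.
*)

theory Submission
  imports Defs "Jordan_Normal_Form.Spectral_Radius"
begin

section \<open>Nonnegative symmetric matrices\<close>

lemma mult_mat_vec_nth_sum:
  "A \<in> carrier_mat n n \<Longrightarrow> v \<in> carrier_vec n \<Longrightarrow> i < n \<Longrightarrow> (A *\<^sub>v v) $ i = (\<Sum>j<n. A $$ (i, j) * v $ j)"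
  by (auto simp: scalar_prod_def row_def atLeast0LessThan intro!: sum.cong)

lemma mult_mat_vec_vec_nth_sum:
  "A \<in> carrier_mat n n \<Longrightarrow> i < n \<Longrightarrow> (A *\<^sub>v vec n f) $ i = (\<Sum>j<n. A $$ (i, j) * f j)"
  by (auto simp: scalar_prod_def row_def atLeast0LessThan intro!: sum.cong)

lemma nonzero_vec_nth: "v \<in> carrier_vec n \<Longrightarrow> v \<noteq> 0\<^sub>v n \<Longrightarrow> \<exists>j<n. v $ j \<noteq> 0"
  by (metis carrier_vecD eq_vecI index_zero_vec)

lemma eigenvalue_abs_le_supervector:
  fixes A :: "real mat"
  assumes A: "A \<in> carrier_mat n n" and nonneg: "\<And>i j. i < n \<Longrightarrow> j < n \<Longrightarrow> 0 \<le> A $$ (i, j)"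
    and pos: "\<And>i. i < n \<Longrightarrow> 0 < y i"
    and super: "\<And>i. i < n \<Longrightarrow> (A *\<^sub>v vec n y) $ i \<le> c * y i"
    and ev: "eigenvalue A k"
  shows "\<bar>k\<bar> \<le> c"
proof -
  from ev A obtain v where v: "v \<in> carrier_vec n" "v \<noteq> 0\<^sub>v n" "A *\<^sub>v v = k \<cdot>\<^sub>v v"
    unfolding eigenvalue_def eigenvector_def by auto
  define f where "f j = \<bar>v $ j\<bar> / y j" for j
  obtain j0 where j0: "j0 < n" "v $ j0 \<noteq> 0" using nonzero_vec_nth[OF v(1,2)] by auto
  obtain i where i: "i < n" and fmax: "\<And>j. j < n \<Longrightarrow> f j \<le> f i"
    using Max_in[of "f ` {..<n}"] Max_ge[of "f ` {..<n}"] j0(1) by fastforce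
  have "0 < f j0" using j0 pos[OF j0(1)] by (simp add: f_def)
  then have "f i > 0" using fmax[OF j0(1)] by linarith
  have vi: "\<bar>v $ i\<bar> = f i * y i" using pos[OF i] by (simp add: f_def)
  have "k * v $ i = (\<Sum>j<n. A $$ (i, j) * v $ j)"
    using v i mult_mat_vec_nth_sum[OF A v(1) i] by simp
  then have "\<bar>k\<bar> * \<bar>v $ i\<bar> = \<bar>\<Sum>j<n. A $$ (i, j) * v $ j\<bar>"
    by (metis abs_mult)
  also have "\<dots> \<le> (\<Sum>j<n. A $$ (i, j) * (f i * y j))"
  proof (rule order_trans[OF sum_abs sum_mono])
    fix j assume "j \<in> {..<n}"
    then have "\<bar>v $ j\<bar> \<le> f i * y j" using fmax[of j] pos[of j] by (simp add: f_def field_simps)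
    then show "\<bar>A $$ (i, j) * v $ j\<bar> \<le> A $$ (i, j) * (f i * y j)"
      using nonneg[OF i, of j] \<open>j \<in> {..<n}\<close> by (simp add: abs_mult mult_left_mono)
  qed
  also have "\<dots> = f i * (A *\<^sub>v vec n y) $ i"
    by (simp add: mult_mat_vec_vec_nth_sum[OF A i] sum_distrib_left algebra_simps)
  also have "\<dots> \<le> c * \<bar>v $ i\<bar>"
    using super[OF i] \<open>f i > 0\<close> vi by (simp add: algebra_simps)
  finally show ?thesis using vi \<open>f i > 0\<close> pos[OF i] by simp
qed

lemma eigenvalue_abs_le_entry_sum:
  fixes A :: "real mat"
  assumes A: "A \<in> carrier_mat n n" and nonneg: "\<And>i j. i < n \<Longrightarrow> j < n \<Longrightarrow> 0 \<le> A $$ (i, j)"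
    and ev: "eigenvalue A k"
  shows "\<bar>k\<bar> \<le> (\<Sum>i<n. \<Sum>j<n. A $$ (i, j))"
proof -
  have row_sum: "(A *\<^sub>v vec n (\<lambda>_. 1)) $ i \<le> (\<Sum>i<n. \<Sum>j<n. A $$ (i, j)) * 1" if i: "i < n" for i
  proof -
    have "(A *\<^sub>v vec n (\<lambda>_. 1)) $ i = (\<Sum>j<n. A $$ (i, j))"
      by (simp add: mult_mat_vec_vec_nth_sum[OF A i])
    also have "\<dots> \<le> (\<Sum>i<n. \<Sum>j<n. A $$ (i, j))"
      using i nonneg by (intro member_le_sum[where f = "\<lambda>i. \<Sum>j<n. A $$ (i, j)"] sum_nonneg) auto
    finally show ?thesis by simp
  qed
  have pos: "(0::real) < 1" if "i < n" for i
    by simp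
  show ?thesis
    by (rule eigenvalue_abs_le_supervector[OF A nonneg pos row_sum ev])
qed

lemma symmetric_mat_complex_eigenvalue_real:
  fixes M :: "real mat"
  assumes M: "M \<in> carrier_mat n n" and sym: "\<And>i j. i < n \<Longrightarrow> j < n \<Longrightarrow> M $$ (i, j) = M $$ (j, i)"
    and ev: "eigenvalue (map_mat complex_of_real M) e"
  shows "e \<in> \<real>"
proof -
  let ?C = "map_mat complex_of_real M"
  have C: "?C \<in> carrier_mat n n" using M by auto
  from ev C obtain v where v: "v \<in> carrier_vec n" "v \<noteq> 0\<^sub>v n" "?C *\<^sub>v v = e \<cdot>\<^sub>v v"
    unfolding eigenvalue_def eigenvector_def by auto
  define S where "S = (\<Sum>i<n. \<Sum>j<n. cnj (v $ i) * of_real (M $$ (i, j)) * v $ j)"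
  define D where "D = (\<Sum>i<n. (cmod (v $ i))\<^sup>2)"
  have Cv: "(\<Sum>j<n. of_real (M $$ (i, j)) * v $ j) = e * v $ i" if i: "i < n" for i
  proof -
    have "(?C *\<^sub>v v) $ i = e * v $ i" using v i by simp
    then show ?thesis using mult_mat_vec_nth_sum[OF C v(1) i] M i by simp
  qed
  have "S = (\<Sum>i<n. cnj (v $ i) * (\<Sum>j<n. of_real (M $$ (i, j)) * v $ j))"
    unfolding S_def by (simp add: sum_distrib_left mult.assoc)
  also have "\<dots> = (\<Sum>i<n. cnj (v $ i) * (e * v $ i))"
    by (intro sum.cong refl) (simp add: Cv)
  also have "\<dots> = (\<Sum>i<n. e * of_real ((cmod (v $ i))\<^sup>2))"
    by (intro sum.cong refl) (subst complex_norm_square, simp add: ac_simps)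
  finally have S_eq: "S = e * of_real D" by (simp add: D_def sum_distrib_left)
  have "cnj S = (\<Sum>i<n. \<Sum>j<n. v $ i * of_real (M $$ (i, j)) * cnj (v $ j))"
    unfolding S_def by (simp add: cnj_sum)
  also have "\<dots> = (\<Sum>j<n. \<Sum>i<n. v $ i * of_real (M $$ (i, j)) * cnj (v $ j))"
    by (rule sum.swap)
  also have "\<dots> = S" unfolding S_def using sym
    by (intro sum.cong refl) (auto simp: algebra_simps)
  finally have "S \<in> \<real>" by (metis Reals_cnj_iff)
  obtain j where j: "j < n" "v $ j \<noteq> 0" using nonzero_vec_nth[OF v(1,2)] by auto
  have "0 < (cmod (v $ j))\<^sup>2" using j by simp
  also have "\<dots> \<le> D" unfolding D_def by (rule member_le_sum) (use j in auto)
  finally have "D \<noteq> 0" by simp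
  with \<open>S \<in> \<real>\<close> S_eq show ?thesis
    by (metis Reals_divide Reals_of_real nonzero_mult_div_cancel_right of_real_eq_0_iff)
qed

lemma eigenvalue_of_real_eigenvalue_complex:
  fixes M :: "real mat"
  assumes M: "M \<in> carrier_mat n n" and "eigenvalue (map_mat complex_of_real M) (complex_of_real r)"
  shows "eigenvalue M r"
proof -
  have "poly (char_poly (map_mat complex_of_real M)) (complex_of_real r) = 0"
    using assms eigenvalue_root_char_poly[of "map_mat complex_of_real M" n] by auto
  then have "poly (char_poly M) r = 0"
    unfolding of_real_hom.char_poly_hom[OF M] of_real_hom.poly_map_poly by simp
  then show ?thesis using eigenvalue_root_char_poly[OF M] by auto
qed

lemma symmetric_mat_has_eigenvalue:
  fixes M :: "real mat"
  assumes M: "M \<in> carrier_mat n n" and sym: "\<And>i j. i < n \<Longrightarrow> j < n \<Longrightarrow> M $$ (i, j) = M $$ (j, i)"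
    and "n > 0"
  shows "\<exists>r. eigenvalue M r"
proof -
  obtain e where e: "eigenvalue (map_mat complex_of_real M) e"
    using spectrum_non_empty[of "map_mat complex_of_real M" n] M \<open>n > 0\<close> by (auto simp: spectrum_def)
  obtain r where "e = complex_of_real r"
    using symmetric_mat_complex_eigenvalue_real[OF M sym e] by (auto simp: Reals_def)
  with e have "eigenvalue M r"
    using eigenvalue_of_real_eigenvalue_complex[OF M] by simp
  then show ?thesis ..
qed

lemma pow_mat_Suc_left:
  assumes "A \<in> carrier_mat n n"
  shows "A ^\<^sub>m Suc k = A * A ^\<^sub>m k"
proof (induct k)
  case (Suc k)
  have "A ^\<^sub>m Suc (Suc k) = (A * A ^\<^sub>m k) * A" using Suc by simp
  also have "\<dots> = A * (A ^\<^sub>m k * A)" using assms by (intro assoc_mult_mat) auto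
  finally show ?case by simp
qed (use assms in simp)

lemma symmetric_mat_pow_bounded:
  fixes M :: "real mat"
  assumes M: "M \<in> carrier_mat n n" and sym: "\<And>i j. i < n \<Longrightarrow> j < n \<Longrightarrow> M $$ (i, j) = M $$ (j, i)"
    and ev: "\<And>r. eigenvalue M r \<Longrightarrow> \<bar>r\<bar> < 1"
  obtains C where "\<And>k i j. i < n \<Longrightarrow> j < n \<Longrightarrow> \<bar>(M ^\<^sub>m k) $$ (i, j)\<bar> \<le> C"
proof (cases "n = 0")
  case False
  let ?C = "map_mat complex_of_real M"
  have C: "?C \<in> carrier_mat n n" using M by auto
  obtain e where e: "eigenvalue ?C e" and radius: "spectral_radius ?C = cmod e"
    using spectral_radius_mem_max(1)[OF C] False by (auto simp: spectrum_def)
  obtain r where "e = complex_of_real r"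
    using symmetric_mat_complex_eigenvalue_real[OF M sym e] by (auto simp: Reals_def)
  with e have "eigenvalue M r" "cmod e = \<bar>r\<bar>"
    using eigenvalue_of_real_eigenvalue_complex[OF M] by auto
  with ev radius have "spectral_radius ?C < 1" by simp
  then obtain c where c: "\<And>k. norm_bound (?C ^\<^sub>m k) c"
    using spectral_radius_jnf_norm_bound_less_1_upper_triangular[OF C] by blast
  show ?thesis
  proof (rule that)
    fix k i j assume "i < n" "j < n"
    moreover have "?C ^\<^sub>m k = map_mat complex_of_real (M ^\<^sub>m k)"
      using M by (metis of_real_hom.mat_hom_pow)
    ultimately show "\<bar>(M ^\<^sub>m k) $$ (i, j)\<bar> \<le> c"
      using c[of k] M unfolding norm_bound_def by (metis index_map_mat pow_mat_dim_square norm_of_real)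
  qed
qed (use that in auto)

lemma subvector_pow_mat:
  fixes M :: "real mat"
  assumes M: "M \<in> carrier_mat n n" and nonneg: "\<And>i j. i < n \<Longrightarrow> j < n \<Longrightarrow> 0 \<le> M $$ (i, j)"
    and "0 \<le> \<rho>" and sub: "\<And>i. i < n \<Longrightarrow> \<rho> * x i \<le> (M *\<^sub>v vec n x) $ i"
    and "i < n"
  shows "\<rho> ^ k * x i \<le> (M ^\<^sub>m k *\<^sub>v vec n x) $ i"
  using \<open>i < n\<close>
proof (induct k arbitrary: i)
  case 0
  then show ?case using M by simp
next
  case (Suc k)
  have Mk: "M ^\<^sub>m k \<in> carrier_mat n n" using M by simp
  have "\<rho> ^ Suc k * x i \<le> \<rho> ^ k * (M *\<^sub>v vec n x) $ i"
    using mult_left_mono[OF sub[OF Suc.prems], of "\<rho> ^ k"] \<open>0 \<le> \<rho>\<close> by (simp add: ac_simps)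
  also have "\<dots> = (\<Sum>j<n. M $$ (i, j) * (\<rho> ^ k * x j))"
    by (simp add: mult_mat_vec_vec_nth_sum[OF M Suc.prems] sum_distrib_left ac_simps)
  also have "\<dots> \<le> (\<Sum>j<n. M $$ (i, j) * (M ^\<^sub>m k *\<^sub>v vec n x) $ j)"
    using Suc.hyps nonneg[OF Suc.prems] by (intro sum_mono mult_left_mono) auto
  also have "\<dots> = (M *\<^sub>v (M ^\<^sub>m k *\<^sub>v vec n x)) $ i"
    using Mk by (simp add: mult_mat_vec_nth_sum[OF M _ Suc.prems])
  also have "\<dots> = (M ^\<^sub>m Suc k *\<^sub>v vec n x) $ i"
    unfolding pow_mat_Suc_left[OF M] using assoc_mult_mat_vec[OF M Mk, of "vec n x"] by simp
  finally show ?case .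
qed

lemma subvector_factor_le_1:
  fixes M :: "real mat"
  assumes M: "M \<in> carrier_mat n n" and nonneg: "\<And>i j. i < n \<Longrightarrow> j < n \<Longrightarrow> 0 \<le> M $$ (i, j)"
    and bounded: "\<And>k i j. i < n \<Longrightarrow> j < n \<Longrightarrow> \<bar>(M ^\<^sub>m k) $$ (i, j)\<bar> \<le> C"
    and x: "\<And>i. i < n \<Longrightarrow> 0 \<le> x i" "i0 < n" "0 < x i0"
    and sub: "\<And>i. i < n \<Longrightarrow> \<rho> * x i \<le> (M *\<^sub>v vec n x) $ i"
  shows "\<rho> \<le> 1"
proof (rule ccontr)
  assume "\<not> \<rho> \<le> 1"
  then obtain k where k: "C * (\<Sum>j<n. x j) / x i0 < \<rho> ^ k"
    using real_arch_pow[of \<rho>] by fastforce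
  have "\<rho> ^ k * x i0 \<le> (M ^\<^sub>m k *\<^sub>v vec n x) $ i0"
    using subvector_pow_mat[OF M nonneg _ sub x(2)] \<open>\<not> \<rho> \<le> 1\<close> by simp
  also have "\<dots> = (\<Sum>j<n. (M ^\<^sub>m k) $$ (i0, j) * x j)"
    using M x(2) by (intro mult_mat_vec_vec_nth_sum) auto
  also have "\<dots> \<le> (\<Sum>j<n. C * x j)"
    using bounded[OF x(2)] x(1) by (intro sum_mono mult_right_mono) (auto simp: abs_le_iff)
  finally show False
    using k x(3) by (simp add: sum_distrib_left field_simps)
qed

lemma shifted_mat_mult_vec_nth:
  fixes A :: "real mat"
  assumes A: "A \<in> carrier_mat n n" and v: "v \<in> carrier_vec n" and i: "i < n"
  shows "((1 / d) \<cdot>\<^sub>m (A + c \<cdot>\<^sub>m 1\<^sub>m n) *\<^sub>v v) $ i = ((A *\<^sub>v v) $ i + c * v $ i) / d"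
proof -
  have B: "(1 / d) \<cdot>\<^sub>m (A + c \<cdot>\<^sub>m 1\<^sub>m n) \<in> carrier_mat n n" using A by simp
  have entry: "((1 / d) \<cdot>\<^sub>m (A + c \<cdot>\<^sub>m 1\<^sub>m n)) $$ (i, j) * v $ j
      = A $$ (i, j) * v $ j / d + (if j = i then c * v $ i / d else 0)" if "j < n" for j
    using that i A by (auto simp: add_divide_distrib distrib_right)
  have "((1 / d) \<cdot>\<^sub>m (A + c \<cdot>\<^sub>m 1\<^sub>m n) *\<^sub>v v) $ i
      = (\<Sum>j<n. A $$ (i, j) * v $ j / d + (if j = i then c * v $ i / d else 0))"
    unfolding mult_mat_vec_nth_sum[OF B v i] by (intro sum.cong refl entry) simp
  also have "\<dots> = ((A *\<^sub>v v) $ i + c * v $ i) / d"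
    by (simp add: sum.distrib i mult_mat_vec_nth_sum[OF A v i] sum_divide_distrib add_divide_distrib)
  finally show ?thesis .
qed

lemma eigenvalue_of_shifted_mat:
  fixes A :: "real mat"
  assumes A: "A \<in> carrier_mat n n" and "d \<noteq> 0"
    and "eigenvalue ((1 / d) \<cdot>\<^sub>m (A + c \<cdot>\<^sub>m 1\<^sub>m n)) r"
  shows "eigenvalue A (d * r - c)"
proof -
  obtain v where v: "v \<in> carrier_vec n" "v \<noteq> 0\<^sub>v n" "(1 / d) \<cdot>\<^sub>m (A + c \<cdot>\<^sub>m 1\<^sub>m n) *\<^sub>v v = r \<cdot>\<^sub>v v"
    using assms(3) A unfolding eigenvalue_def eigenvector_def by auto
  have "A *\<^sub>v v = (d * r - c) \<cdot>\<^sub>v v"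
  proof (rule eq_vecI)
    fix i assume "i < dim_vec ((d * r - c) \<cdot>\<^sub>v v)"
    then have i: "i < n" using v by simp
    have "r * v $ i = ((A *\<^sub>v v) $ i + c * v $ i) / d"
      using arg_cong[OF v(3), of "\<lambda>w. w $ i"] shifted_mat_mult_vec_nth[OF A v(1) i] v(1) i by simp
    then show "(A *\<^sub>v v) $ i = ((d * r - c) \<cdot>\<^sub>v v) $ i"
      using \<open>d \<noteq> 0\<close> v(1) i by (simp add: field_simps)
  qed (use A v in simp)
  then show ?thesis using A v unfolding eigenvalue_def eigenvector_def by auto
qed

text \<open>Shifting and scaling turns A into a matrix M whose eigenvalues lie in [0, 1), so that
  the powers of M stay bounded; but a subvector of A for \<mu> is a subvector of M for a factor
  greater than 1, forcing exponential growth.\<close>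

lemma eigenvalue_ge_subvector:
  fixes A :: "real mat"
  assumes A: "A \<in> carrier_mat n n" and nonneg: "\<And>i j. i < n \<Longrightarrow> j < n \<Longrightarrow> 0 \<le> A $$ (i, j)"
    and sym: "\<And>i j. i < n \<Longrightarrow> j < n \<Longrightarrow> A $$ (i, j) = A $$ (j, i)"
    and x: "\<And>i. i < n \<Longrightarrow> 0 \<le> x i" "i0 < n" "0 < x i0"
    and sub: "\<And>i. i < n \<Longrightarrow> \<mu> * x i \<le> (A *\<^sub>v vec n x) $ i" and "0 < \<mu>"
  shows "\<exists>k. eigenvalue A k \<and> \<mu> \<le> k"
proof (rule ccontr)
  assume "\<not> ?thesis"
  then have below: "\<And>k. eigenvalue A k \<Longrightarrow> k < \<mu>" by force
  define c where "c = (\<Sum>i<n. \<Sum>j<n. A $$ (i, j))"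
  have c: "\<And>k. eigenvalue A k \<Longrightarrow> \<bar>k\<bar> \<le> c" "0 \<le> c"
    using eigenvalue_abs_le_entry_sum[OF A nonneg] nonneg by (auto simp: c_def intro!: sum_nonneg)
  define m where "m = Max (insert (- c) {k. eigenvalue A k})"
  have "finite {k. eigenvalue A k}"
    using card_finite_spectrum(1)[OF A] by (simp add: spectrum_def)
  then have m: "- c \<le> m" "\<And>k. eigenvalue A k \<Longrightarrow> k \<le> m" "m < \<mu>"
    using Max_in[of "insert (- c) {k. eigenvalue A k}"] below c \<open>0 < \<mu>\<close>
    by (auto simp: m_def)
  define d where "d = (m + \<mu>) / 2 + c"
  have d: "m + c < d" "d < \<mu> + c" "0 < d" using m(1,3) by (simp_all add: d_def field_simps)
  define M where "M = (1 / d) \<cdot>\<^sub>m (A + c \<cdot>\<^sub>m 1\<^sub>m n)"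
  have M: "M \<in> carrier_mat n n" using A by (simp add: M_def)
  have M_nonneg: "0 \<le> M $$ (i, j)" if "i < n" "j < n" for i j
    using that A nonneg[OF that] c(2) d(3) by (simp add: M_def)
  have M_sym: "M $$ (i, j) = M $$ (j, i)" if "i < n" "j < n" for i j
    using that A sym[OF that] by (simp add: M_def)
  have M_ev: "\<bar>r\<bar> < 1" if "eigenvalue M r" for r
  proof -
    have "eigenvalue A (d * r - c)"
      using eigenvalue_of_shifted_mat[OF A _ that[unfolded M_def]] d(3) by simp
    then have "0 \<le> d * r" "d * r < d * 1" using c(1) m(2) d(1) by fastforce+
    then show ?thesis using d(3) by (simp add: zero_le_mult_iff)
  qed
  obtain C where C: "\<And>k i j. i < n \<Longrightarrow> j < n \<Longrightarrow> \<bar>(M ^\<^sub>m k) $$ (i, j)\<bar> \<le> C"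
    using symmetric_mat_pow_bounded[OF M M_sym M_ev] by blast
  have "(\<mu> + c) / d * x i \<le> (M *\<^sub>v vec n x) $ i" if "i < n" for i
  proof -
    have "(\<mu> + c) / d * x i = (\<mu> * x i + c * x i) / d" by (simp add: field_simps)
    also have "\<dots> \<le> ((A *\<^sub>v vec n x) $ i + c * x i) / d"
      using sub[OF that] d(3) by (simp add: divide_right_mono)
    also have "\<dots> = (M *\<^sub>v vec n x) $ i"
      unfolding M_def using that by (subst shifted_mat_mult_vec_nth[OF A]) auto
    finally show ?thesis .
  qed
  then have "(\<mu> + c) / d \<le> 1"
    using subvector_factor_le_1[of M n C x i0 "(\<mu> + c) / d"] M M_nonneg C x by blast
  with d show False by simp
qed

section \<open>Adjacency matrices of graphs\<close>

definition adjacent :: "(nat \<times> nat) set \<Rightarrow> nat \<Rightarrow> nat \<Rightarrow> bool" where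
  "adjacent E i j \<longleftrightarrow> i \<noteq> j \<and> ((i, j) \<in> E \<or> (j, i) \<in> E)"

lemma adjacent_sym: "adjacent E i j \<longleftrightarrow> adjacent E j i"
  by (auto simp: adjacent_def)

lemma pend_first_edge: "0 < len \<Longrightarrow> (a, f) \<in> pend a f len"
  by (simp add: pend_def)

lemma pend_next_edge: "k + 1 < len \<Longrightarrow> (f + k, f + k + 1) \<in> pend a f len"
  by (auto simp: pend_def)

lemma adj_matrix_carrier [simp]: "adj_matrix N E \<in> carrier_mat N N"
  by (simp add: adj_matrix_def)

lemma adj_matrix_nth: "i < N \<Longrightarrow> j < N \<Longrightarrow> adj_matrix N E $$ (i, j) = (if adjacent E i j then 1 else 0)"
  by (simp add: adj_matrix_def adjacent_def)

lemma adj_matrix_nonneg: "i < N \<Longrightarrow> j < N \<Longrightarrow> 0 \<le> adj_matrix N E $$ (i, j)"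
  by (simp add: adj_matrix_nth)

lemma adj_matrix_symmetric: "i < N \<Longrightarrow> j < N \<Longrightarrow> adj_matrix N E $$ (i, j) = adj_matrix N E $$ (j, i)"
  by (auto simp: adj_matrix_nth adjacent_def)

lemma adj_matrix_mult_vec_nth:
  assumes "i < N"
  shows "(adj_matrix N E *\<^sub>v vec N f) $ i = sum f {j. j < N \<and> adjacent E i j}"
proof -
  have "(adj_matrix N E *\<^sub>v vec N f) $ i = (\<Sum>j<N. if adjacent E i j then f j else 0)"
    using assms by (auto simp: mult_mat_vec_vec_nth_sum adj_matrix_nth intro!: sum.cong)
  also have "\<dots> = sum f {j. j < N \<and> adjacent E i j}"
    by (simp add: sum.If_cases Collect_conj_eq lessThan_def Int_commute)
  finally show ?thesis .
qed

lemma adj_matrix_mult_vec_ge: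
  assumes "i < N" and "Nb \<subseteq> {j. j < N \<and> adjacent E i j}" and "\<And>j. j < N \<Longrightarrow> 0 \<le> f j"
  shows "sum f Nb \<le> (adj_matrix N E *\<^sub>v vec N f) $ i"
  unfolding adj_matrix_mult_vec_nth[OF assms(1)] using assms(2,3) by (intro sum_mono2) auto

lemma adj_matrix_mult_vec_le:
  assumes "i < N" and "finite Nb" and "{j. j < N \<and> adjacent E i j} \<subseteq> Nb" and "\<And>j. j \<in> Nb \<Longrightarrow> 0 \<le> f j"
  shows "(adj_matrix N E *\<^sub>v vec N f) $ i \<le> sum f Nb"
  unfolding adj_matrix_mult_vec_nth[OF assms(1)] using assms(2-4) by (intro sum_mono2) auto

lemma rho_ge_subvector:
  assumes x: "\<And>i. i < N \<Longrightarrow> 0 \<le> x i" "i0 < N" "0 < x i0" and "0 < \<mu>"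
    and sub: "\<And>i. i < N \<Longrightarrow> \<mu> * x i \<le> (adj_matrix N E *\<^sub>v vec N x) $ i"
  shows "\<mu> \<le> rho N E"
proof -
  have A: "adj_matrix N E \<in> carrier_mat N N" by simp
  obtain k where "eigenvalue (adj_matrix N E) k" "\<mu> \<le> k"
    using eigenvalue_ge_subvector[of "adj_matrix N E" N x i0 \<mu>] x sub \<open>0 < \<mu>\<close>
      adj_matrix_nonneg adj_matrix_symmetric by auto
  moreover have "finite {k. eigenvalue (adj_matrix N E) k}"
    using card_finite_spectrum(1)[OF A] by (simp add: spectrum_def)
  ultimately show ?thesis
    unfolding rho_def by (meson Max_ge mem_Collect_eq order_trans)
qed

lemma rho_le_supervector:
  assumes "0 < N" and pos: "\<And>i. i < N \<Longrightarrow> 0 < y i"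
    and super: "\<And>i. i < N \<Longrightarrow> (adj_matrix N E *\<^sub>v vec N y) $ i \<le> c * y i"
  shows "rho N E \<le> c"
proof -
  have A: "adj_matrix N E \<in> carrier_mat N N" by simp
  have "{k. eigenvalue (adj_matrix N E) k} \<noteq> {}"
    using symmetric_mat_has_eigenvalue[OF A adj_matrix_symmetric \<open>0 < N\<close>] by auto
  moreover have "finite {k. eigenvalue (adj_matrix N E) k}"
    using card_finite_spectrum(1)[OF A] by (simp add: spectrum_def)
  moreover have "k \<le> c" if "eigenvalue (adj_matrix N E) k" for k
    using eigenvalue_abs_le_supervector[OF A adj_matrix_nonneg pos super that] by simp
  ultimately show ?thesis
    unfolding rho_def by simp
qed

section \<open>Eigenvector weights along paths\<close>

text \<open>Along a path, the eigenvalue equations for \<mu> = s + 1/s are the recurrence of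
  \<open>path_weight_rec\<close>; path_weight s k solves it with value 0 one step beyond the free end of a
  pendant path, so it is the entry k - 1 steps in from that end.\<close>

definition path_weight :: "real \<Rightarrow> nat \<Rightarrow> real" where
  "path_weight s k = s ^ k - (1 / s) ^ k"

text \<open>Entries along the path from u to v2 in the tree [h,q1,q2], indexed by the distance from u:
  the same recurrence, started with the value path_weight s 3 that the pendant paths at u need
  at their attachment vertex; \<open>arm_weight_1\<close> is the eigenvalue equation at u.\<close>

definition arm_weight :: "real \<Rightarrow> nat \<Rightarrow> real" where
  "arm_weight s k = path_weight s (k + 3) - (s + 1 / s) * path_weight s k"

lemma path_weight_rec:
  assumes "s \<noteq> 0"
  shows "path_weight s (k + 2) + path_weight s k = (s + 1 / s) * path_weight s (k + 1)"
  using assms by (simp add: path_weight_def field_simps power_add)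

lemma path_weight_2: "s \<noteq> 0 \<Longrightarrow> path_weight s 2 = (s + 1 / s) * path_weight s 1"
  by (simp add: path_weight_def field_simps power2_eq_square)

lemma path_weight_3: "s \<noteq> 0 \<Longrightarrow> path_weight s 3 + path_weight s 1 = (s + 1 / s) * path_weight s 2"
  by (simp add: path_weight_def field_simps power2_eq_square power3_eq_cube)

lemma arm_weight_rec:
  assumes "s \<noteq> 0"
  shows "arm_weight s (k + 2) + arm_weight s k = (s + 1 / s) * arm_weight s (k + 1)"
proof -
  let ?P = "path_weight s" and ?\<mu> = "s + 1 / s"
  have "arm_weight s (k + 2) + arm_weight s k = (?P (k + 3 + 2) + ?P (k + 3)) - ?\<mu> * (?P (k + 2) + ?P k)"
    by (simp add: arm_weight_def algebra_simps)
  also have "\<dots> = ?\<mu> * arm_weight s (k + 1)"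
    unfolding path_weight_rec[OF assms] by (simp add: arm_weight_def algebra_simps)
  finally show ?thesis .
qed

lemma arm_weight_0: "arm_weight s 0 = path_weight s 3"
  by (simp add: arm_weight_def path_weight_def)

lemma arm_weight_1:
  assumes "s \<noteq> 0"
  shows "arm_weight s 1 + 2 * path_weight s 2 = (s + 1 / s) * arm_weight s 0"
proof -
  have "path_weight s 4 + path_weight s 2 = (s + 1 / s) * path_weight s 3"
    using path_weight_rec[OF assms, of 2] by simp
  with path_weight_2[OF assms] show ?thesis
    by (simp add: arm_weight_def path_weight_def[of _ 0] algebra_simps)
qed

lemma arm_weight_Suc_less:
  assumes "t > 1"
  shows "arm_weight t (k + 1) < t * arm_weight t k"
proof -
  have t0: "t \<noteq> 0" using assms by simp
  have key: "t * (a * t ^ 3 - b / t ^ 3 - (t + 1 / t) * (a - b)) - (a * t ^ 4 - b / t ^ 4 - (t + 1 / t) * (a * t - b / t))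
      = b * ((t\<^sup>2 - 1) + (1 - 1 / t\<^sup>2)\<^sup>2)" for a b :: real
    using t0 by (simp add: field_simps power2_eq_square power3_eq_cube power4_eq_xxxx)
  have "t * arm_weight t k - arm_weight t (k + 1) = (1 / t) ^ k * ((t\<^sup>2 - 1) + (1 - (1 / t)\<^sup>2)\<^sup>2)"
    using key[of "t ^ k" "(1 / t) ^ k"]
    by (simp add: arm_weight_def path_weight_def power_add power_one_over ac_simps)
  also have "\<dots> > 0"
    using assms by (intro mult_pos_pos add_pos_nonneg) (auto simp: one_less_power)
  finally show ?thesis by simp
qed

lemma path_weight_pos:
  assumes "s > 1" and "k \<ge> 1"
  shows "path_weight s k > 0"
proof -
  have "(1 / s) ^ k < 1" using assms by (simp add: power_less_one_iff)
  moreover have "1 \<le> s ^ k" using assms by simp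
  ultimately show ?thesis unfolding path_weight_def by simp
qed

lemma arm_weight_pos:
  assumes "s > 1" and "s\<^sup>2 \<ge> 2"
  shows "arm_weight s k > 0"
proof -
  have s0: "s \<noteq> 0" using assms by simp
  have "s\<^sup>2 * s\<^sup>2 \<ge> 2 * s\<^sup>2"
    using assms by (intro mult_right_mono) auto
  moreover have "s * (s ^ 3 - s - 1 / s) = s\<^sup>2 * s\<^sup>2 - s\<^sup>2 - 1"
    using s0 by (simp add: field_simps power2_eq_square power3_eq_cube)
  ultimately have "s * (s ^ 3 - s - 1 / s) > 0"
    using assms by linarith
  then have lead: "s ^ 3 - s - 1 / s > 0"
    using assms by (simp add: zero_less_mult_iff)
  have "(1 / s) ^ 3 \<le> 1 / s"
    using power_decreasing[of 1 3 "1 / s"] assms by simp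
  then have tail: "s + 1 / s - (1 / s) ^ 3 > 0"
    using assms by simp
  have "arm_weight s k = s ^ k * (s ^ 3 - s - 1 / s) + (1 / s) ^ k * (s + 1 / s - (1 / s) ^ 3)"
    using s0 by (simp add: arm_weight_def path_weight_def power_add field_simps)
  also have "\<dots> > 0"
    using lead tail assms by (intro add_pos_pos mult_pos_pos) auto
  finally show ?thesis .
qed

lemma path_weight_balance:
  fixes r :: real
  assumes "r \<ge> 3"
  obtains t where "t > 1" "t\<^sup>2 \<ge> 2" "r * path_weight t 2 = t * path_weight t 3"
proof -
  define d where "d = r - 1"
  define w where "w = (d + sqrt (d\<^sup>2 + 4 * d)) / 2"
  have d: "d \<ge> 2" using assms by (simp add: d_def)
  have "sqrt (d\<^sup>2 + 4 * d) \<ge> sqrt (d\<^sup>2)" using d by (intro real_sqrt_le_mono) auto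
  then have w2: "w \<ge> 2" using d by (simp add: w_def)
  have "(sqrt (d\<^sup>2 + 4 * d))\<^sup>2 = d\<^sup>2 + 4 * d" using d by simp
  then have quad: "w\<^sup>2 = (r - 1) * (w + 1)"
    by (simp add: w_def d_def power2_eq_square field_simps)
  define t where "t = sqrt w"
  have t: "t > 1" "t\<^sup>2 = w" using w2 by (auto simp: t_def)
  have "w ^ 3 - 1 = (w - 1) * (w\<^sup>2 + w + 1)"
    by (simp add: algebra_simps power2_eq_square power3_eq_cube)
  also have "\<dots> = r * (w\<^sup>2 - 1)"
    using quad by (simp add: algebra_simps power2_eq_square)
  finally have "(w ^ 3 - 1) / w = r * ((w\<^sup>2 - 1) / w)" by simp
  moreover have "path_weight t 2 = (w\<^sup>2 - 1) / w"
    using t w2 by (simp add: path_weight_def power_one_over field_simps power2_eq_square)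
  moreover have "t * path_weight t 3 = (w ^ 3 - 1) / w"
  proof -
    have "t * path_weight t 3 = ((t\<^sup>2) ^ 3 - 1) / t\<^sup>2"
      using t(1) by (simp add: path_weight_def field_simps power2_eq_square power3_eq_cube)
    then show ?thesis using t(2) by simp
  qed
  ultimately show thesis using that t w2 by simp
qed

lemma isCont_arm_balance:
  "t > 0 \<Longrightarrow> isCont (\<lambda>s. r * path_weight s 2 * arm_weight s q - path_weight s 3 * arm_weight s (q + 1)) t"
  unfolding arm_weight_def path_weight_def by (intro continuous_intros) auto

lemma isCont_pos_right:
  fixes f :: "real \<Rightarrow> real"
  assumes "isCont f t" and "0 < f t"
  obtains s where "t < s" and "0 < f s"
proof -
  have "(f \<longlongrightarrow> f t) (at_right t)"
    using assms(1) by (simp add: isCont_def filterlim_at_split)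
  then have "\<forall>\<^sub>F s in at_right t. 0 < f s"
    using assms(2) by (rule order_tendstoD(1))
  then have "\<forall>\<^sub>F s in at_right t. t < s \<and> 0 < f s"
    by (rule eventually_conj[OF eventually_at_right_less])
  then show thesis
    using eventually_happens'[OF trivial_limit_at_right_real] that by blast
qed

lemma plus_inverse_strict_mono:
  fixes s t :: real
  assumes "1 \<le> t" and "t < s"
  shows "t + 1 / t < s + 1 / s"
proof -
  have "1 * 1 < s * t"
    using assms by (intro mult_less_le_imp_less) auto
  then have "0 < (s - t) * (s * t - 1) / (s * t)"
    using assms by (intro divide_pos_pos mult_pos_pos) auto
  also have "\<dots> = (s + 1 / s) - (t + 1 / t)"
    using assms by (simp add: field_simps)
  finally show ?thesis by simp
qed

section \<open>The starlike tree T_j\<close>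

lemma star_T_edgeD:
  assumes "(a, b) \<in> star_T_edges r2 j"
  shows "1 \<le> b \<and> (a = 0 \<and> odd b \<and> b \<le> 1 + 2 * r2 \<or> b = a + 1 \<and> odd a \<and> a < 2 * r2
      \<or> b = a + 1 \<and> 1 + 2 * r2 \<le> a)"
  using assms unfolding star_T_edges_def pend_def by (auto split: if_splits)

lemma star_T_adjacentD:
  assumes "adjacent (star_T_edges r2 j) i k"
  shows "i = 0 \<Longrightarrow> k = 1 + 2 * r2 \<or> (\<exists>a<r2. k = 1 + 2 * a)"
    and "1 \<le> i \<Longrightarrow> i \<le> 2 * r2 \<Longrightarrow> odd i \<Longrightarrow> k = 0 \<or> k = i + 1"
    and "1 \<le> i \<Longrightarrow> i \<le> 2 * r2 \<Longrightarrow> even i \<Longrightarrow> k = i - 1"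
    and "2 * r2 < i \<Longrightarrow> k = (if i = 1 + 2 * r2 then 0 else i - 1) \<or> k = i + 1"
proof -
  have edge: "1 \<le> k \<and> (i = 0 \<and> odd k \<and> k \<le> 1 + 2 * r2 \<or> k = i + 1 \<and> odd i \<and> i < 2 * r2
      \<or> k = i + 1 \<and> 1 + 2 * r2 \<le> i) \<or>
    1 \<le> i \<and> (k = 0 \<and> odd i \<and> i \<le> 1 + 2 * r2 \<or> i = k + 1 \<and> odd k \<and> k < 2 * r2
      \<or> i = k + 1 \<and> 1 + 2 * r2 \<le> k)"
    using assms star_T_edgeD[of i k r2 j] star_T_edgeD[of k i r2 j] unfolding adjacent_def by blast
  show "i = 0 \<Longrightarrow> k = 1 + 2 * r2 \<or> (\<exists>a<r2. k = 1 + 2 * a)" using edge by (auto; presburger)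
  show "1 \<le> i \<Longrightarrow> i \<le> 2 * r2 \<Longrightarrow> odd i \<Longrightarrow> k = 0 \<or> k = i + 1" using edge by (auto; presburger)
  show "1 \<le> i \<Longrightarrow> i \<le> 2 * r2 \<Longrightarrow> even i \<Longrightarrow> k = i - 1" using edge by (auto; presburger)
  show "2 * r2 < i \<Longrightarrow> k = (if i = 1 + 2 * r2 then 0 else i - 1) \<or> k = i + 1" using edge by (auto; presburger)
qed

text \<open>A supervector for \<mu> = t + 1/t of the adjacency matrix of T_j: the pendant paths of
  length 2 carry the eigenvector pattern, and the long path the geometric decay (1/t)^k of an
  eigenvector of an infinite ray. The only strict inequality is the one at the centre, which is the
  assumption \<open>balance\<close>.\<close>

locale star_T_test_vector =
  fixes r2 j :: nat and t :: real
  assumes t: "1 < t" and balance: "real r2 * path_weight t 2 \<le> t * path_weight t 3"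
begin

abbreviation "N \<equiv> star_T_verts r2 j"
abbreviation "E \<equiv> star_T_edges r2 j"
abbreviation "\<mu> \<equiv> t + 1 / t"

definition y :: "nat \<Rightarrow> real" where
  "y i = (if i = 0 then path_weight t 3
     else if i \<le> 2 * r2 then (if odd i then path_weight t 2 else path_weight t 1)
     else path_weight t 3 * (1 / t) ^ (i - 2 * r2))"

lemma t_nonzero: "t \<noteq> 0"
  using t by simp

lemma y_pos: "0 < y i"
  using t by (simp add: y_def path_weight_pos)

lemma mult_vec_le_sum:
  assumes "i < N" and "finite Nb" and "\<And>k. adjacent E i k \<Longrightarrow> k \<in> Nb"
  shows "(adj_matrix N E *\<^sub>v vec N y) $ i \<le> sum y Nb"
  using assms y_pos by (intro adj_matrix_mult_vec_le) (auto intro: less_imp_le)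

lemma supervector_centre: "(adj_matrix N E *\<^sub>v vec N y) $ 0 \<le> \<mu> * y 0"
proof -
  let ?Nb = "insert (1 + 2 * r2) ((\<lambda>a. 1 + 2 * a) ` {..<r2})"
  have "(adj_matrix N E *\<^sub>v vec N y) $ 0 \<le> sum y ?Nb"
    using star_T_adjacentD(1)[of r2 j 0]
    by (intro mult_vec_le_sum) (auto simp: star_T_verts_def image_iff)
  also have "sum y ?Nb = path_weight t 3 * (1 / t) + real r2 * path_weight t 2"
    by (subst sum.insert) (auto simp: sum.reindex inj_on_def y_def)
  also have "\<dots> \<le> \<mu> * y 0"
    using balance by (simp add: y_def algebra_simps)
  finally show ?thesis .
qed

lemma supervector_legs:
  assumes "1 \<le> i" "i \<le> 2 * r2"
  shows "(adj_matrix N E *\<^sub>v vec N y) $ i \<le> \<mu> * y i"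
proof (cases "odd i")
  case True
  have "(adj_matrix N E *\<^sub>v vec N y) $ i \<le> sum y {0, i + 1}"
    using star_T_adjacentD(2)[of r2 j i] assms True
    by (intro mult_vec_le_sum) (auto simp: star_T_verts_def)
  also have "sum y {0, i + 1} = path_weight t 3 + path_weight t 1"
  proof -
    have "i + 1 \<le> 2 * r2" "even (i + 1)" using assms True by presburger+
    then show ?thesis by (simp add: y_def)
  qed
  also have "\<dots> = \<mu> * y i"
    using assms True path_weight_3[OF t_nonzero] by (simp add: y_def)
  finally show ?thesis .
next
  case False
  have "(adj_matrix N E *\<^sub>v vec N y) $ i \<le> sum y {i - 1}"
    using star_T_adjacentD(3)[of r2 j i] assms False
    by (intro mult_vec_le_sum) (auto simp: star_T_verts_def)
  also have "sum y {i - 1} = \<mu> * y i"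
  proof -
    have "i - 1 \<noteq> 0" "odd (i - 1)" "i - 1 \<le> 2 * r2" using assms False by presburger+
    then show ?thesis using assms False path_weight_2[OF t_nonzero] by (simp add: y_def)
  qed
  finally show ?thesis .
qed

lemma supervector_ray:
  assumes "2 * r2 < i" "i < N"
  shows "(adj_matrix N E *\<^sub>v vec N y) $ i \<le> \<mu> * y i"
proof -
  define k where "k = i - 1 - 2 * r2"
  have ik: "i = 1 + 2 * r2 + k" using assms(1) by (simp add: k_def)
  define prev where "prev = (if i = 1 + 2 * r2 then 0 else i - 1)"
  have "(adj_matrix N E *\<^sub>v vec N y) $ i \<le> sum y {prev, i + 1}"
    using star_T_adjacentD(4)[of r2 j i] assms unfolding prev_def by (intro mult_vec_le_sum) auto
  also have "sum y {prev, i + 1} = path_weight t 3 * (1 / t) ^ k + path_weight t 3 * (1 / t) ^ (k + 2)"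
  proof -
    have "y prev = path_weight t 3 * (1 / t) ^ k"
      using ik by (auto simp: y_def prev_def)
    moreover have "i + 1 - 2 * r2 = k + 2" using ik by simp
    then have "y (i + 1) = path_weight t 3 * (1 / t) ^ (k + 2)"
      using ik by (simp add: y_def)
    moreover have "prev \<noteq> i + 1" by (auto simp: prev_def)
    ultimately show ?thesis by simp
  qed
  also have "\<dots> = \<mu> * y i"
    using ik t_nonzero by (simp add: y_def field_simps power_add)
  finally show ?thesis .
qed

lemma rho_le: "rho N E \<le> \<mu>"
proof (rule rho_le_supervector)
  show "(adj_matrix N E *\<^sub>v vec N y) $ i \<le> \<mu> * y i" if "i < N" for i
    using supervector_centre supervector_legs supervector_ray that
    by (cases "i = 0"; cases "i \<le> 2 * r2") auto
qed (auto simp: star_T_verts_def y_pos)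

end

lemma rho_star_T_le:
  assumes "t > 1" and "real r2 * path_weight t 2 \<le> t * path_weight t 3"
  shows "rho (star_T_verts r2 j) (star_T_edges r2 j) \<le> t + 1 / t"
proof -
  interpret star_T_test_vector r2 j t
    using assms by unfold_locales
  show ?thesis by (rule rho_le)
qed

section \<open>The tree [h,q1,q2]\<close>

text \<open>A subvector for \<mu> = s + 1/s of the adjacency matrix of [h,q1,q2]: the eigenvector pattern
  on u, the first two vertices of the paths of lengths h and q1, the path from u to v2 and the
  pendant paths at v2, and 0 elsewhere. The assumption \<open>balance\<close> is the inequality at v2.\<close>

locale tree_F_test_vector =
  fixes r1 r2 h q1 q2 :: nat and s :: real
  assumes h: "2 \<le> h" and q1: "2 \<le> q1" and q2: "2 \<le> q2" and s: "1 < s" "2 \<le> s\<^sup>2"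
    and balance: "path_weight s 3 * arm_weight s (q2 + 1) \<le> real r2 * path_weight s 2 * arm_weight s q2"
begin

abbreviation "N \<equiv> tree_F_verts r1 r2 h q1 q2"
abbreviation "E \<equiv> tree_F_edges r1 r2 h q1 q2"
abbreviation "\<mu> \<equiv> s + 1 / s"

definition S :: nat where "S = h + q1 + 1 + 2 * r1"
definition v2 :: nat where "v2 = S + q2 - 1"

definition arm :: "nat \<Rightarrow> nat" where "arm m = (if m = 0 then 0 else S + m - 1)"

definition x :: "nat \<Rightarrow> real" where
  "x i = (if i = 0 then path_weight s 3
     else if i = 1 \<or> i = h + 1 then path_weight s 2
     else if i = 2 \<or> i = h + 2 then path_weight s 1
     else if S \<le> i \<and> i \<le> v2 then arm_weight s (i + 1 - S)
     else if v2 < i \<and> i < N then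
       arm_weight s q2 / path_weight s 3 * (if odd (i - v2) then path_weight s 2 else path_weight s 1)
     else 0)"

lemma N_eq: "N = v2 + 1 + 2 * r2"
  using q2 by (simp add: tree_F_verts_def v2_def S_def)

lemma arm_q2: "arm q2 = v2"
  using q2 by (simp add: arm_def v2_def)

lemma E_eq: "E = pend 0 1 h \<union> pend 0 (h + 1) q1 \<union> (\<Union>i<r1. pend (h + q1) (h + q1 + 1 + 2 * i) 2)
    \<union> pend 0 S q2 \<union> (\<Union>i<r2. pend v2 (v2 + 1 + 2 * i) 2)"
  by (simp add: tree_F_edges_def Let_def S_def v2_def)

lemma adjacent_edges:
  shows "adjacent E 0 1" "adjacent E 1 2" "adjacent E 0 (h + 1)" "adjacent E (h + 1) (h + 2)"
    and "m < q2 \<Longrightarrow> adjacent E (arm m) (arm (m + 1))"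
    and "a < r2 \<Longrightarrow> adjacent E v2 (v2 + 1 + 2 * a)"
    and "a < r2 \<Longrightarrow> adjacent E (v2 + 1 + 2 * a) (v2 + 2 + 2 * a)"
proof -
  have S: "h + 3 \<le> S" using q1 by (simp add: S_def)
  have "(0, 1) \<in> pend 0 1 h" "(1, 2) \<in> pend 0 1 h"
    using pend_first_edge[of h 0 1] pend_next_edge[of 0 h 1 0] h by (simp_all add: numeral_2_eq_2)
  moreover have "(0, h + 1) \<in> pend 0 (h + 1) q1" "(h + 1, h + 2) \<in> pend 0 (h + 1) q1"
    using pend_first_edge[of q1 0 "h + 1"] pend_next_edge[of 0 q1 "h + 1" 0] q1 by simp_all
  ultimately show "adjacent E 0 1" "adjacent E 1 2" "adjacent E 0 (h + 1)" "adjacent E (h + 1) (h + 2)"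
    unfolding E_eq adjacent_def by auto
  show "adjacent E (arm m) (arm (m + 1))" if "m < q2"
  proof (cases m)
    case 0
    then have "(arm m, arm (m + 1)) \<in> pend 0 S q2"
      using pend_first_edge[of q2 0 S] q2 by (simp add: arm_def)
    then show ?thesis using S unfolding E_eq adjacent_def arm_def by auto
  next
    case (Suc k)
    then have "(arm m, arm (m + 1)) \<in> pend 0 S q2"
      using pend_next_edge[of k q2 S 0] that by (simp add: arm_def)
    then show ?thesis using S unfolding E_eq adjacent_def arm_def by auto
  qed
  show "adjacent E v2 (v2 + 1 + 2 * a)" "adjacent E (v2 + 1 + 2 * a) (v2 + 2 + 2 * a)" if "a < r2"
  proof -
    have "(v2, v2 + 1 + 2 * a) \<in> pend v2 (v2 + 1 + 2 * a) 2"
      "(v2 + 1 + 2 * a, v2 + 2 + 2 * a) \<in> pend v2 (v2 + 1 + 2 * a) 2"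
      using pend_first_edge[of 2 v2] pend_next_edge[of 0 2 "v2 + 1 + 2 * a" v2] by simp_all
    then show "adjacent E v2 (v2 + 1 + 2 * a)" "adjacent E (v2 + 1 + 2 * a) (v2 + 2 + 2 * a)"
      using that unfolding E_eq adjacent_def by auto
  qed
qed

lemma s_nonzero: "s \<noteq> 0"
  using s by simp

lemma x_nonneg: "0 \<le> x i"
  using path_weight_pos[OF s(1)] arm_weight_pos[OF s] by (auto simp: x_def less_imp_le)

lemma x_center_legs: "x 0 = path_weight s 3" "x 1 = path_weight s 2" "x 2 = path_weight s 1"
    "x (h + 1) = path_weight s 2" "x (h + 2) = path_weight s 1"
  using h by (auto simp: x_def)

lemma x_arm: "m \<le> q2 \<Longrightarrow> x (arm m) = arm_weight s m"
  using h q1 q2 by (auto simp: x_def arm_def v2_def S_def arm_weight_0)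

lemma x_v2_legs:
  assumes "a < r2"
  shows "x (v2 + 1 + 2 * a) = arm_weight s q2 / path_weight s 3 * path_weight s 2"
    and "x (v2 + 2 + 2 * a) = arm_weight s q2 / path_weight s 3 * path_weight s 1"
  using assms h q1 q2 N_eq by (auto simp: x_def v2_def S_def)

lemma subvector_at:
  assumes "i < N" and "Nb \<subseteq> {j. j < N \<and> adjacent E i j}" and "\<mu> * x i \<le> sum x Nb"
  shows "\<mu> * x i \<le> (adj_matrix N E *\<^sub>v vec N x) $ i"
proof -
  have "sum x Nb \<le> (adj_matrix N E *\<^sub>v vec N x) $ i"
    by (rule adj_matrix_mult_vec_ge[OF assms(1,2)]) (rule x_nonneg)
  with assms(3) show ?thesis by linarith
qed

lemma subvector_leg:
  assumes "adjacent E c a" "adjacent E a b" "b \<noteq> c" "a < N" "b < N" "c < N"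
    and "x c = w * path_weight s 3" "x a = w * path_weight s 2" "x b = w * path_weight s 1"
  shows "\<mu> * x a \<le> (adj_matrix N E *\<^sub>v vec N x) $ a"
    and "\<mu> * x b \<le> (adj_matrix N E *\<^sub>v vec N x) $ b"
proof -
  have "\<mu> * x a = w * (path_weight s 3 + path_weight s 1)"
    by (simp only: assms(8) mult.left_commute[of \<mu> w] path_weight_3[OF s_nonzero, symmetric])
  then have "\<mu> * x a = x c + x b"
    using assms(7,9) by (simp add: distrib_left)
  then show "\<mu> * x a \<le> (adj_matrix N E *\<^sub>v vec N x) $ a"
    using assms(1-6) by (intro subvector_at[of _ "{c, b}"]) (auto simp: adjacent_sym)
  have "\<mu> * x b = x a"
    by (simp only: assms(8,9) mult.left_commute[of \<mu> w] path_weight_2[OF s_nonzero, symmetric])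
  then show "\<mu> * x b \<le> (adj_matrix N E *\<^sub>v vec N x) $ b"
    using assms(2,4,5) by (intro subvector_at[of _ "{a}"]) (auto simp: adjacent_sym)
qed

lemma subvector_center: "\<mu> * x 0 \<le> (adj_matrix N E *\<^sub>v vec N x) $ 0"
proof (rule subvector_at[of _ "{1, h + 1, arm 1}"])
  have S: "h + 3 \<le> S" using q1 by (simp add: S_def)
  show "0 < N" by (simp add: N_eq)
  show "{1, h + 1, arm 1} \<subseteq> {j. j < N \<and> adjacent E 0 j}"
    using adjacent_edges(1,3) adjacent_edges(5)[of 0] q2 S N_eq by (auto simp: arm_def v2_def)
  have "sum x {1, h + 1, arm 1} = 2 * path_weight s 2 + arm_weight s 1"
    using x_center_legs x_arm[of 1] q2 S h by (simp add: arm_def)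
  also have "\<dots> = \<mu> * x 0"
    using arm_weight_1[OF s_nonzero] by (simp add: x_center_legs arm_weight_0)
  finally show "\<mu> * x 0 \<le> sum x {1, h + 1, arm 1}" by simp
qed

lemma subvector_arm:
  assumes "m + 1 < q2"
  shows "\<mu> * x (arm (m + 1)) \<le> (adj_matrix N E *\<^sub>v vec N x) $ arm (m + 1)"
proof (rule subvector_at[of _ "{arm m, arm (m + 2)}"])
  have arm_less: "arm k < N" if "k \<le> q2" for k
    using that q2 N_eq by (auto simp: arm_def v2_def)
  show "arm (m + 1) < N" using assms arm_less by simp
  show "{arm m, arm (m + 2)} \<subseteq> {j. j < N \<and> adjacent E (arm (m + 1)) j}"
    using adjacent_edges(5)[of m] adjacent_edges(5)[of "m + 1"] assms arm_less
    by (auto simp: adjacent_sym)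
  have "arm m \<noteq> arm (m + 2)" by (auto simp: arm_def)
  then show "\<mu> * x (arm (m + 1)) \<le> sum x {arm m, arm (m + 2)}"
    using assms x_arm arm_weight_rec[OF s_nonzero, of m] by simp
qed

lemma subvector_v2: "\<mu> * x v2 \<le> (adj_matrix N E *\<^sub>v vec N x) $ v2"
proof (rule subvector_at[of _ "insert (arm (q2 - 1)) ((\<lambda>a. v2 + 1 + 2 * a) ` {..<r2})"])
  let ?P = "path_weight s" and ?Z = "arm_weight s"
  show "v2 < N" by (simp add: N_eq)
  show "insert (arm (q2 - 1)) ((\<lambda>a. v2 + 1 + 2 * a) ` {..<r2}) \<subseteq> {j. j < N \<and> adjacent E v2 j}"
    using adjacent_edges(5)[of "q2 - 1"] adjacent_edges(6) q2 N_eq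
    by (auto simp: adjacent_sym arm_q2[symmetric] arm_def v2_def)
  have P3: "?P 3 > 0" using path_weight_pos[OF s(1)] by simp
  have "arm (q2 - 1) \<notin> (\<lambda>a. v2 + 1 + 2 * a) ` {..<r2}"
    using q2 by (auto simp: arm_def v2_def)
  then have "sum x (insert (arm (q2 - 1)) ((\<lambda>a. v2 + 1 + 2 * a) ` {..<r2}))
      = ?Z (q2 - 1) + real r2 * (?Z q2 / ?P 3 * ?P 2)"
    using x_arm[of "q2 - 1"] x_v2_legs(1) by (simp add: sum.reindex inj_on_def)
  moreover have "?Z (q2 + 1) \<le> real r2 * (?Z q2 / ?P 3 * ?P 2)"
    using balance P3 by (simp add: field_simps)
  moreover have "?Z (q2 + 1) + ?Z (q2 - 1) = \<mu> * ?Z q2"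
    using arm_weight_rec[OF s_nonzero, of "q2 - 1"] q2 by simp
  moreover have "\<mu> * x v2 = \<mu> * ?Z q2" using x_arm[of q2] by (simp add: arm_q2)
  ultimately show "\<mu> * x v2 \<le> sum x (insert (arm (q2 - 1)) ((\<lambda>a. v2 + 1 + 2 * a) ` {..<r2}))"
    by linarith
qed

lemma subvector: "i < N \<Longrightarrow> \<mu> * x i \<le> (adj_matrix N E *\<^sub>v vec N x) $ i"
proof -
  assume i: "i < N"
  have S: "h + 3 \<le> S" using q1 by (simp add: S_def)
  have below_N: "0 < N" "2 < N" "h + 2 < N" "v2 < N" using S q2 by (auto simp: N_eq v2_def)
  have S_less_v2: "S < v2" using q2 by (simp add: v2_def)
  consider "i = 0" | "i = 1 \<or> i = 2" | "i = h + 1 \<or> i = h + 2" | "S \<le> i" "i < v2" | "i = v2"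
    | "v2 < i" | "i \<notin> {0, 1, 2, h + 1, h + 2}" "i < S"
    using S_less_v2 by (cases "i < S"; cases "i < v2"; cases "i = v2") auto
  then show ?thesis
  proof cases
    case 1
    then show ?thesis using subvector_center by simp
  next
    case 2
    then show ?thesis
      using subvector_leg[of 0 1 2 1] adjacent_edges(1,2) x_center_legs below_N by auto
  next
    case 3
    then show ?thesis
      using subvector_leg[of 0 "h + 1" "h + 2" 1] adjacent_edges(3,4) x_center_legs below_N by auto
  next
    case 4
    then have "i - S + 1 < q2" "i = arm (i - S + 1)" by (auto simp: arm_def v2_def)
    then show ?thesis using subvector_arm by metis
  next
    case 5
    then show ?thesis using subvector_v2 by simp
  next
    case 6
    then have "\<exists>a<r2. i = v2 + 1 + 2 * a \<or> i = v2 + 2 + 2 * a"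
      using i unfolding N_eq by presburger
    then obtain a where a: "a < r2" "i = v2 + 1 + 2 * a \<or> i = v2 + 2 + 2 * a" by blast
    have "x v2 = arm_weight s q2 / path_weight s 3 * path_weight s 3"
      using x_arm[of q2] path_weight_pos[OF s(1), of 3] by (simp add: arm_q2)
    note leg = subvector_leg[OF adjacent_edges(6,7)[OF a(1)] _ _ _ _ this x_v2_legs[OF a(1)]]
    show ?thesis
      using a leg by (auto simp: N_eq)
  next
    case 7
    then have "x i = 0" using S_less_v2 by (auto simp: x_def)
    then show ?thesis using subvector_at[OF i, of "{}"] by simp
  qed
qed

lemma rho_ge: "\<mu> \<le> rho N E"
proof (rule rho_ge_subvector)
  show "0 < x 0" using path_weight_pos[OF s(1)] by (simp add: x_center_legs)
  show "0 < N" by (simp add: N_eq)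
  show "0 < \<mu>" using s by (simp add: add_pos_pos)
qed (use x_nonneg subvector in auto)

end

lemma rho_tree_F_ge:
  assumes "2 \<le> h" "2 \<le> q1" "2 \<le> q2" "1 < s" "2 \<le> s\<^sup>2"
    and "path_weight s 3 * arm_weight s (q2 + 1) \<le> real r2 * path_weight s 2 * arm_weight s q2"
  shows "s + 1 / s \<le> rho (tree_F_verts r1 r2 h q1 q2) (tree_F_edges r1 r2 h q1 q2)"
proof -
  interpret tree_F_test_vector r1 r2 h q1 q2 s
    using assms by unfold_locales
  show ?thesis by (rule rho_ge)
qed

theorem theorem2p1:
  fixes r1 r2 h q1 q2 j :: nat
  assumes "2 \<le> r1" and "r1 < r2"
    and "2 \<le> h" and "2 \<le> q1" and "2 \<le> q2"
    and "3 \<le> j"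
  shows "rho (tree_F_verts r1 r2 h q1 q2) (tree_F_edges r1 r2 h q1 q2)
         > rho (star_T_verts r2 j) (star_T_edges r2 j)"
proof -
  obtain t where t: "t > 1" "t\<^sup>2 \<ge> 2" and balance: "real r2 * path_weight t 2 = t * path_weight t 3"
    using path_weight_balance[of "real r2"] assms(1,2) by auto
  define \<phi> where "\<phi> s = real r2 * path_weight s 2 * arm_weight s q2 - path_weight s 3 * arm_weight s (q2 + 1)"
    for s
  have "\<phi> t = path_weight t 3 * (t * arm_weight t q2 - arm_weight t (q2 + 1))"
    unfolding \<phi>_def balance by (simp add: algebra_simps)
  then have "\<phi> t > 0"
    using path_weight_pos[OF t(1)] arm_weight_Suc_less[OF t(1)] by simp
  moreover have "isCont \<phi> t"
    unfolding \<phi>_def using t(1) by (intro isCont_arm_balance) simp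
  ultimately obtain s where s: "t < s" "\<phi> s > 0"
    using isCont_pos_right by blast
  have "t\<^sup>2 < s\<^sup>2" using s t by (intro power_strict_mono) auto
  then have "s + 1 / s \<le> rho (tree_F_verts r1 r2 h q1 q2) (tree_F_edges r1 r2 h q1 q2)"
    using rho_tree_F_ge[OF assms(3-5)] s t by (simp add: \<phi>_def)
  moreover have "t + 1 / t < s + 1 / s"
    using plus_inverse_strict_mono s t by simp
  moreover have "rho (star_T_verts r2 j) (star_T_edges r2 j) \<le> t + 1 / t"
    \<comment> \<open>holds for every j\<close>
    using rho_star_T_le[OF t(1)] balance by simp
  ultimately show ?thesis by linarith
qed

end
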